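(* Let $k\ge 2$ be an integer and let $K:[0,1]^2\to(0,\infty)$ be continuous. Let $W$ be the linear operator on $C[0,1]$, $(Wf)(t)=\int_0^1K(t,u)f(u)\,du$, let $R_k:C_0^+[0,1]\to C_0^+[0,1]$ be $(R_kf)(t)=\left[\frac{(Wf)(t)}{(Wf)(0)}\right]^k$, and let $H_k$ be the Hammerstein operator $(H_kf)(t)=\int_0^1K(t,u)f^k(u)\,du$ on $C^+[0,1]$. Then the equation $R_kf=f$ has a solution $f\in C_0^+[0,1]$ if and only if there exist $\lambda>0$ and a nonzero $f\in C^+[0,1]$ with $H_kf=\lambda f$.
   Context: $C^+[0,1]=\{f\in C[0,1]: f(x)\ge 0 \text{ for all } x\}$ and $C_0^+[0,1]=C^+[0,1]\setminus\{0\}$ (the identically zero function removed). *)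

theory Defs
  imports "HOL-Analysis.Analysis"
begin

text \<open>Functions on [0,1] are represented as real-valued functions on the reals;
  only their values on {0..1} matter.\<close>

definition Cplus :: "(real \<Rightarrow> real) set" where
  "Cplus = {f. continuous_on {0..1} f \<and> (\<forall>x\<in>{0..1}. f x \<ge> 0)}"

definition Cplus0 :: "(real \<Rightarrow> real) set" where
  "Cplus0 = {f \<in> Cplus. \<exists>x\<in>{0..1}. f x \<noteq> 0}"

definition Wop :: "(real \<Rightarrow> real \<Rightarrow> real) \<Rightarrow> (real \<Rightarrow> real) \<Rightarrow> real \<Rightarrow> real" where
  "Wop K f t = integral {0..1} (\<lambda>u. K t u * f u)"

definition Rop :: "nat \<Rightarrow> (real \<Rightarrow> real \<Rightarrow> real) \<Rightarrow> (real \<Rightarrow> real) \<Rightarrow> real \<Rightarrow> real" where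
  "Rop k K f t = (Wop K f t / Wop K f 0) ^ k"

definition Hop :: "nat \<Rightarrow> (real \<Rightarrow> real \<Rightarrow> real) \<Rightarrow> (real \<Rightarrow> real) \<Rightarrow> real \<Rightarrow> real" where
  "Hop k K f t = integral {0..1} (\<lambda>u. K t u * f u ^ k)"

end

theory Submission
  imports Defs
begin

(* The two eigen-problems are related by the change of variables f = g^k.
   If R_k f = f with a = (Wf)(0), then a > 0 (otherwise R_k f = 0 = f), and
   g = f^(1/k) satisfies H_k g = W f = a * f^(1/k) = a * g, so g is an
   eigenfunction of H_k with eigenvalue a.  Conversely, if H_k g = c * g with
   c > 0 and g nonzero, the strict positivity of the kernel forces g > 0 everywhere,
   in particular g(0) > 0, and f = (g / g(0))^k satisfies W f = c * g / g(0)^k,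
   whence (W f)(t) / (W f)(0) = g(t) / g(0) and R_k f = f. *)

lemma Cplus0_witness:
  assumes "f \<in> Cplus0"
  obtains x where "x \<in> {0..1}" "f x \<noteq> 0"
  using assms by (auto simp: Cplus0_def)

lemma Wop_nonneg:
  assumes Knn: "\<forall>t\<in>{0..1}. \<forall>u\<in>{0..1}. K t u \<ge> 0"
    and f: "f \<in> Cplus" and t: "t \<in> {0..1}"
  shows "Wop K f t \<ge> 0"
proof (cases "(\<lambda>u. K t u * f u) integrable_on {0..1}")
  case True
  then show ?thesis unfolding Wop_def
    by (rule integral_nonneg) (use f t Knn in \<open>auto simp: Cplus_def\<close>)
next
  case False
  then show ?thesis by (simp add: Wop_def not_integrable_integral)
qed

lemma Hop_root:
  assumes "k > 0" and "\<forall>u\<in>{0..1}. f u \<ge> 0"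
  shows "Hop k K (\<lambda>u. root k (f u)) t = Wop K f t"
  unfolding Hop_def Wop_def by (rule integral_cong) (use assms in simp)

lemma Wop_scaled_power:
  "Wop K (\<lambda>u. (g u / a) ^ k) t = Hop k K g t / a ^ k"
  unfolding Wop_def Hop_def by (simp add: power_divide)

lemma Cplus0_root:
  assumes "k > 0" and "f \<in> Cplus0"
  shows "(\<lambda>t. root k (f t)) \<in> Cplus0"
  using assms by (auto simp: Cplus0_def Cplus_def intro!: continuous_intros)

lemma Cplus0_scaled_power:
  assumes "g \<in> Cplus0" and "a > 0" and "g 0 \<noteq> 0"
  shows "(\<lambda>t. (g t / a) ^ k) \<in> Cplus0"
  using assms by (fastforce simp: Cplus0_def Cplus_def intro!: continuous_intros)

(* A nonzero nonnegative eigenfunction of H_k (for any eigenvalue) with a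
   strictly positive continuous kernel is strictly positive on [0,1]: if
   g(t) = 0 then the integrand K(t,.) g^k vanishes identically, contradicting
   g(x) > 0 somewhere. *)
lemma Hop_eigenfunction_pos:
  assumes Kcont: "continuous_on ({0..1} \<times> {0..1}) (\<lambda>(t, u). K t u)"
    and Kpos: "\<forall>t\<in>{0..1}. \<forall>u\<in>{0..1}. K t u > 0"
    and g: "g \<in> Cplus0" and eig: "\<forall>t\<in>{0..1}. Hop k K g t = c * g t"
    and t: "t \<in> {0..1}"
  shows "g t > 0"
proof (rule ccontr)
  obtain x where x: "x \<in> {0..1}" "g x \<noteq> 0" using g by (rule Cplus0_witness)
  have gcont: "continuous_on {0..1} g" and gnn: "\<forall>u\<in>{0..1}. g u \<ge> 0"
    using g by (auto simp: Cplus0_def Cplus_def)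
  have Kt: "continuous_on {0..1} (\<lambda>u. K t u)"
    using continuous_on_compose2[OF Kcont, of "{0..1}" "\<lambda>u. (t, u)"] t
    by (simp add: image_subset_iff continuous_on_Pair[OF continuous_on_const continuous_on_id])
  have Ktnn: "\<forall>u\<in>{0..1}. K t u \<ge> 0" using Kpos t by (simp add: less_imp_le)
  assume "\<not> g t > 0"
  then have "g t = 0" using gnn t by force
  then have "integral {0..1} (\<lambda>u. K t u * g u ^ k) = 0"
    using eig t by (simp add: Hop_def)
  then have "\<forall>u\<in>{0..1}. K t u * g u ^ k = 0"
    by (subst (asm) integral_eq_0_iff)
      (use Kt gcont gnn Ktnn in \<open>auto intro!: continuous_intros\<close>)
  then show False using x Kpos t by fastforce
qed

lemma fixed_point_to_eigenfunction:
  assumes "k > 0" and Knn: "\<forall>t\<in>{0..1}. \<forall>u\<in>{0..1}. K t u \<ge> 0"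
    and f: "f \<in> Cplus0" and fixed: "\<forall>t\<in>{0..1}. Rop k K f t = f t"
  shows "\<exists>c>0. \<exists>g\<in>Cplus0. \<forall>t\<in>{0..1}. Hop k K g t = c * g t"
proof -
  define a where "a = Wop K f 0"
  have fC: "f \<in> Cplus" using f by (simp add: Cplus0_def)
  have fnn: "\<forall>u\<in>{0..1}. f u \<ge> 0" using fC by (simp add: Cplus_def)
  obtain x where x: "x \<in> {0..1}" "f x \<noteq> 0" using f by (rule Cplus0_witness)
  have "a \<noteq> 0"
    using fixed x \<open>k > 0\<close> by (force simp: Rop_def a_def power_0_left)
  moreover have "a \<ge> 0" unfolding a_def by (rule Wop_nonneg[OF Knn fC]) auto
  ultimately have a: "a > 0" by simp
  have root_f: "root k (f t) = Wop K f t / a" if t: "t \<in> {0..1}" for t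
  proof -
    have "f t = (Wop K f t / a) ^ k" using fixed t by (simp add: Rop_def a_def)
    moreover have "Wop K f t / a \<ge> 0" using Wop_nonneg[OF Knn fC t] a by simp
    ultimately show ?thesis using \<open>k > 0\<close> real_root_pos_unique by metis
  qed
  have "\<forall>t\<in>{0..1}. Hop k K (\<lambda>u. root k (f u)) t = a * root k (f t)"
    using a by (simp add: Hop_root[OF \<open>k > 0\<close> fnn] root_f)
  then show ?thesis using a Cplus0_root[OF \<open>k > 0\<close> f] by blast
qed

lemma eigenfunction_to_fixed_point:
  assumes Kcont: "continuous_on ({0..1} \<times> {0..1}) (\<lambda>(t, u). K t u)"
    and Kpos: "\<forall>t\<in>{0..1}. \<forall>u\<in>{0..1}. K t u > 0"
    and c: "c > 0" and g: "g \<in> Cplus0" and eig: "\<forall>t\<in>{0..1}. Hop k K g t = c * g t"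
  shows "\<exists>f\<in>Cplus0. \<forall>t\<in>{0..1}. Rop k K f t = f t"
proof -
  define f where "f = (\<lambda>t. (g t / g 0) ^ k)"
  have g0: "g 0 > 0" by (rule Hop_eigenfunction_pos[OF Kcont Kpos g eig]) simp
  have Wf: "Wop K f t = c * g t / g 0 ^ k" if "t \<in> {0..1}" for t
    using eig that by (simp add: f_def Wop_scaled_power)
  have "Rop k K f t = f t" if t: "t \<in> {0..1}" for t
  proof -
    have "Wop K f t / Wop K f 0 = g t / g 0"
      using c g0 by (simp add: Wf[OF t] Wf[of 0] field_simps)
    then show ?thesis by (simp add: Rop_def f_def)
  qed
  moreover have "f \<in> Cplus0"
    unfolding f_def using Cplus0_scaled_power[OF g g0] g0 by simp
  ultimately show ?thesis by blast
qed

theorem lemma2p1: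
  fixes k :: nat and K :: "real \<Rightarrow> real \<Rightarrow> real"
  assumes "k \<ge> 2"
    and "continuous_on ({0..1} \<times> {0..1}) (\<lambda>(t, u). K t u)"
    and "\<forall>t\<in>{0..1}. \<forall>u\<in>{0..1}. K t u > 0"
  shows "(\<exists>f\<in>Cplus0. \<forall>t\<in>{0..1}. Rop k K f t = f t) \<longleftrightarrow>
         (\<exists>c>0. \<exists>f\<in>Cplus0. \<forall>t\<in>{0..1}. Hop k K f t = c * f t)"
proof
  assume "\<exists>f\<in>Cplus0. \<forall>t\<in>{0..1}. Rop k K f t = f t"
  moreover have "k > 0" using assms(1) by simp
  moreover have "\<forall>t\<in>{0..1}. \<forall>u\<in>{0..1}. K t u \<ge> 0" using assms(3) by (simp add: less_imp_le)
  ultimately show "\<exists>c>0. \<exists>f\<in>Cplus0. \<forall>t\<in>{0..1}. Hop k K f t = c * f t"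
    using fixed_point_to_eigenfunction by blast
next
  assume "\<exists>c>0. \<exists>f\<in>Cplus0. \<forall>t\<in>{0..1}. Hop k K f t = c * f t"
  then show "\<exists>f\<in>Cplus0. \<forall>t\<in>{0..1}. Rop k K f t = f t"
    using eigenfunction_to_fixed_point[OF assms(2,3)] by blast
qed

end
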